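(* Let $G$ be a metabelian group (i.e. $G''=1$) with $G/G'\cong\mathbb{Z}$, and let $a,b\in G$ be such that the abelianization map $G\to G/G'$ sends $a$ and $b$ to the same generator of $\mathbb{Z}$. Then $a$ is conjugate to $b$ in $G$. *)

theory Defs
  imports "HOL-Algebra.Algebra"
begin

end

(*
  Let N = G'. Since G/N is infinite cyclic with generator the image of a, every element of G
  has the form n a^k with n in N, and N is abelian because G'' = 1. As N is abelian, x |-> [a,x]
  is an endomorphism of N, so M = {[a,x] | x in N} is a subgroup. The elements g with [g,N] <= M
  form a subgroup containing a and N, hence all of G; using that powers of a commute, this puts
  every commutator [g,h] into M, so G' = M. Now b lies in the coset G'a, so b = [a,x] a = x^-1 a x
  for some x in N.
*)
theory Submission
  imports Defs
begin

abbreviation (in group) commutator :: "'a \<Rightarrow> 'a \<Rightarrow> 'a" where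
  "commutator x y \<equiv> x \<otimes> y \<otimes> inv x \<otimes> inv y"

context group
begin

lemma inv_mult_cancel_left [simp]:
  "x \<in> carrier G \<Longrightarrow> y \<in> carrier G \<Longrightarrow> inv x \<otimes> (x \<otimes> y) = y"
  by (simp add: m_assoc [symmetric])

lemma mult_inv_cancel_left [simp]:
  "x \<in> carrier G \<Longrightarrow> y \<in> carrier G \<Longrightarrow> x \<otimes> (inv x \<otimes> y) = y"
  by (simp add: m_assoc [symmetric])

lemma commutator_eq_one_iff:
  assumes "x \<in> carrier G" "y \<in> carrier G"
  shows "commutator x y = \<one> \<longleftrightarrow> x \<otimes> y = y \<otimes> x"
proof -
  have "commutator x y = x \<otimes> y \<otimes> inv (y \<otimes> x)"
    using assms by (simp add: m_assoc inv_mult_group)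
  then show ?thesis
    using assms by (simp add: inv_solve_right')
qed

lemma inv_commutator:
  assumes "x \<in> carrier G" "y \<in> carrier G"
  shows "inv (commutator x y) = commutator y x"
  using assms by (simp add: m_assoc inv_mult_group)

lemma commutator_mult_left:
  assumes "g \<in> carrier G" "h \<in> carrier G" "x \<in> carrier G"
  shows "commutator (g \<otimes> h) x = commutator g (h \<otimes> x \<otimes> inv h) \<otimes> commutator h x"
  using assms by (simp add: m_assoc inv_mult_group)

lemma commutator_inv_left:
  assumes "g \<in> carrier G" "x \<in> carrier G"
  shows "commutator (inv g) x = inv (commutator g (inv g \<otimes> x \<otimes> g))"
  using assms by (simp add: m_assoc inv_mult_group)

lemma commutator_mult_right:
  assumes "g \<in> carrier G" "x \<in> carrier G" "y \<in> carrier G"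
  shows "commutator g (x \<otimes> y) = g \<otimes> x \<otimes> inv g \<otimes> commutator g y \<otimes> inv x"
  using assms by (simp add: m_assoc inv_mult_group)

lemma commute_if_derived_trivial:
  assumes "derived G H = {\<one>}" "H \<subseteq> carrier G" "x \<in> H" "y \<in> H"
  shows "x \<otimes> y = y \<otimes> x"
proof -
  have "commutator x y \<in> derived G H"
    unfolding derived_def using assms(3,4) by (blast intro: generate.incl)
  moreover have "x \<in> carrier G" "y \<in> carrier G"
    using assms(2-4) by auto
  ultimately show ?thesis
    using assms(1) commutator_eq_one_iff by auto
qed

lemma subgroup_relative_centralizer:
  assumes N: "N \<lhd> G" and M: "subgroup M G"
  shows "subgroup {g \<in> carrier G. \<forall>x\<in>N. commutator g x \<in> M} G"
proof (rule subgroupI)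
  interpret N: normal N G by (rule N)
  show "{g \<in> carrier G. \<forall>x\<in>N. commutator g x \<in> M} \<noteq> {}"
    using subgroup.one_closed[OF M] by auto
  fix g h
  assume g: "g \<in> {g \<in> carrier G. \<forall>x\<in>N. commutator g x \<in> M}"
  then show "inv g \<in> {g \<in> carrier G. \<forall>x\<in>N. commutator g x \<in> M}"
    using N.inv_op_closed1 commutator_inv_left subgroup.m_inv_closed[OF M] by auto
  assume h: "h \<in> {g \<in> carrier G. \<forall>x\<in>N. commutator g x \<in> M}"
  show "g \<otimes> h \<in> {g \<in> carrier G. \<forall>x\<in>N. commutator g x \<in> M}"
    using g h N.inv_op_closed2 commutator_mult_left subgroup.m_closed[OF M] by auto
qed auto

lemma mem_coset_if_iso_eq:
  assumes "N \<lhd> G" "\<phi> \<in> iso (G Mod N) H" "g \<in> carrier G" "h \<in> carrier G"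
    and "\<phi> (N #> g) = \<phi> (N #> h)"
  shows "h \<in> N #> g"
proof -
  have "N #> g \<in> carrier (G Mod N)" "N #> h \<in> carrier (G Mod N)"
    using assms by (auto simp: carrier_FactGroup)
  then have "N #> g = N #> h"
    using assms(2,5) unfolding iso_iff by (meson inj_onD)
  then show ?thesis
    using assms(1,4) normal_imp_subgroup repr_independenceD by blast
qed

lemma decompose_if_FactGroup_iso_integer:
  assumes N: "N \<lhd> G" and \<phi>: "\<phi> \<in> iso (G Mod N) integer_group" and a: "a \<in> carrier G"
    and generator: "\<phi> (N #> a) \<in> {1, -1}" and g: "g \<in> carrier G"
  shows "\<exists>n\<in>N. \<exists>k::int. g = n \<otimes> a [^] k"
proof -
  interpret N: normal N G by (rule N)
  define \<psi> where "\<psi> = \<phi> \<circ> (\<lambda>x. N #> x)"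
  have "\<psi> \<in> hom G integer_group"
    unfolding \<psi>_def using N.r_coset_hom_Mod iso_imp_homomorphism[OF \<phi>] by (rule Group.hom_compose)
  then interpret \<psi>: group_hom G integer_group \<psi>
    by (simp add: group_hom_def group_hom_axioms_def is_group)
  define k where "k = \<psi> g * \<psi> a"
  have "\<psi> (a [^] k) = k * \<psi> a"
    using \<psi>.hom_int_pow[OF a] by simp
  also have "\<dots> = \<psi> g"
    using generator by (auto simp: k_def \<psi>_def)
  finally have "g \<in> N #> a [^] k"
    using mem_coset_if_iso_eq[OF N \<phi>] a g unfolding \<psi>_def by auto
  then show ?thesis
    unfolding r_coset_def by blast
qed

end

locale abelian_by_cyclic = group G for G (structure) +
  fixes N :: "'a set" and a :: 'a
  assumes normal_N: "N \<lhd> G"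
    and N_commute: "\<lbrakk>x \<in> N; y \<in> N\<rbrakk> \<Longrightarrow> x \<otimes> y = y \<otimes> x"
    and a_closed [simp]: "a \<in> carrier G"
    and decompose: "g \<in> carrier G \<Longrightarrow> \<exists>n\<in>N. \<exists>k::int. g = n \<otimes> a [^] k"
begin

definition a_commutators :: "'a set" where
  "a_commutators = commutator a ` N"

lemma N_subgroup: "subgroup N G"
  using normal_N by (rule normal_imp_subgroup)

lemma N_closed [simp]: "x \<in> N \<Longrightarrow> x \<in> carrier G"
  using subgroup.mem_carrier[OF N_subgroup] .

lemma conj_mem_N: "g \<in> carrier G \<Longrightarrow> x \<in> N \<Longrightarrow> g \<otimes> x \<otimes> inv g \<in> N"
  using normal.inv_op_closed2[OF normal_N] by blast

lemma commutator_mem_N: "g \<in> carrier G \<Longrightarrow> x \<in> N \<Longrightarrow> commutator g x \<in> N"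
  using conj_mem_N subgroup.m_closed[OF N_subgroup] subgroup.m_inv_closed[OF N_subgroup]
  by blast

lemma commutator_mult_right_N:
  assumes "g \<in> carrier G" "x \<in> N" "y \<in> carrier G" "commutator g y \<in> N"
  shows "commutator g (x \<otimes> y) = commutator g x \<otimes> commutator g y"
proof -
  have x: "x \<in> carrier G" "inv x \<in> N"
    using assms(2) subgroup.m_inv_closed[OF N_subgroup] by auto
  have "commutator g (x \<otimes> y) = g \<otimes> x \<otimes> inv g \<otimes> (commutator g y \<otimes> inv x)"
    using assms x commutator_mult_right[of g x y] by (simp add: m_assoc)
  also have "\<dots> = g \<otimes> x \<otimes> inv g \<otimes> (inv x \<otimes> commutator g y)"
    using assms(4) x N_commute by simp
  also have "\<dots> = commutator g x \<otimes> commutator g y"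
    using assms x by (simp add: m_assoc)
  finally show ?thesis .
qed

lemma a_commutators_subset_N: "a_commutators \<subseteq> N"
  unfolding a_commutators_def using commutator_mem_N by auto

lemma subgroup_a_commutators: "subgroup a_commutators G"
proof (rule subgroupI)
  show "a_commutators \<subseteq> carrier G"
    using a_commutators_subset_N by auto
  show "a_commutators \<noteq> {}"
    unfolding a_commutators_def using subgroup.one_closed[OF N_subgroup] by blast
next
  fix c assume "c \<in> a_commutators"
  then obtain x where x: "x \<in> N" and c: "c = commutator a x"
    unfolding a_commutators_def by blast
  have inv_x: "inv x \<in> N"
    using x subgroup.m_inv_closed[OF N_subgroup] by blast
  have "commutator a (inv x) \<otimes> c = commutator a (inv x \<otimes> x)"
    unfolding c by (rule commutator_mult_right_N [symmetric]) (use x inv_x commutator_mem_N in auto)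
  then have "commutator a (inv x) \<otimes> c = \<one>"
    using x by simp
  then have "inv c = commutator a (inv x)"
    by (rule inv_equality) (use x c inv_x in auto)
  then show "inv c \<in> a_commutators"
    unfolding a_commutators_def using inv_x by (rule image_eqI)
next
  fix c d assume "c \<in> a_commutators" "d \<in> a_commutators"
  then obtain x y where "x \<in> N" "c = commutator a x" "y \<in> N" "d = commutator a y"
    unfolding a_commutators_def by blast
  then have "c \<otimes> d = commutator a (x \<otimes> y)"
    using commutator_mem_N commutator_mult_right_N[of a x y] by simp
  then show "c \<otimes> d \<in> a_commutators"
    unfolding a_commutators_def using \<open>x \<in> N\<close> \<open>y \<in> N\<close> subgroup.m_closed[OF N_subgroup] by blast
qed

lemma commutator_N_mem_a_commutators:
  assumes g: "g \<in> carrier G" and x: "x \<in> N"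
  shows "commutator g x \<in> a_commutators"
proof -
  let ?S = "{g \<in> carrier G. \<forall>x\<in>N. commutator g x \<in> a_commutators}"
  have S: "subgroup ?S G"
    using normal_N subgroup_a_commutators by (rule subgroup_relative_centralizer)
  have "commutator a y \<in> a_commutators" if "y \<in> N" for y
    unfolding a_commutators_def using that by (rule imageI)
  then have a: "a \<in> ?S"
    using a_closed by blast
  have N: "n \<in> ?S" if n: "n \<in> N" for n
  proof (intro CollectI conjI ballI)
    show "n \<in> carrier G"
      using n by simp
    fix y assume y: "y \<in> N"
    then have "commutator n y = \<one>"
      using n by (auto simp: commutator_eq_one_iff intro: N_commute)
    then show "commutator n y \<in> a_commutators"
      using subgroup.one_closed[OF subgroup_a_commutators] by simp
  qed
  obtain n k where n: "n \<in> N" and g_eq: "g = n \<otimes> a [^] (k::int)"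
    using decompose[OF g] by blast
  have "g \<in> ?S"
    unfolding g_eq using S N[OF n] subgroup_int_pow_closed[OF S a] by (rule subgroup.m_closed)
  then show ?thesis
    using x by blast
qed

lemma commutator_mem_a_commutators:
  assumes g: "g \<in> carrier G" and h: "h \<in> carrier G"
  shows "commutator g h \<in> a_commutators"
proof -
  obtain n i where n: "n \<in> N" and g_eq: "g = n \<otimes> a [^] (i::int)"
    using decompose[OF g] by blast
  obtain m j where m: "m \<in> N" and h_eq: "h = m \<otimes> a [^] (j::int)"
    using decompose[OF h] by blast
  have "a [^] i \<otimes> a [^] j = a [^] j \<otimes> a [^] i"
    by (simp add: add.commute flip: int_pow_mult)
  then have powers_commute: "commutator (a [^] i) (a [^] j) = \<one>"
    by (subst commutator_eq_one_iff) simp_all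
  then have conj: "a [^] i \<otimes> a [^] j \<otimes> inv (a [^] i) = a [^] j"
    by (simp add: inv_solve_right')
  have "commutator g (a [^] j)
      = commutator n (a [^] i \<otimes> a [^] j \<otimes> inv (a [^] i)) \<otimes> commutator (a [^] i) (a [^] j)"
    unfolding g_eq using n by (simp add: commutator_mult_left)
  also have "\<dots> = commutator n (a [^] j)"
    unfolding conj powers_commute using n by simp
  also have "\<dots> = inv (commutator (a [^] j) n)"
    using n by (simp add: inv_commutator)
  finally have pow: "commutator g (a [^] j) \<in> a_commutators"
    using subgroup.m_inv_closed[OF subgroup_a_commutators commutator_N_mem_a_commutators[OF _ n]]
    by simp
  have "commutator g h = commutator g m \<otimes> commutator g (a [^] j)"
    unfolding h_eq using g m pow a_commutators_subset_N by (intro commutator_mult_right_N) auto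
  then show ?thesis
    using subgroup.m_closed[OF subgroup_a_commutators commutator_N_mem_a_commutators[OF g m] pow]
    by simp
qed

lemma derived_subset_a_commutators: "derived G (carrier G) \<subseteq> a_commutators"
  unfolding derived_def
  by (rule generate_subgroup_incl[OF _ subgroup_a_commutators])
    (auto intro: commutator_mem_a_commutators)

lemma conjugate_if_mem_derived_coset:
  assumes "b \<in> derived G (carrier G) #> a"
  shows "\<exists>g\<in>carrier G. b = inv g \<otimes> a \<otimes> g"
proof -
  obtain c where c: "c \<in> derived G (carrier G)" and b: "b = c \<otimes> a"
    using assms unfolding r_coset_def by blast
  then have "c \<in> commutator a ` N"
    using derived_subset_a_commutators unfolding a_commutators_def by blast
  then obtain x where x: "x \<in> N" and c_eq: "c = commutator a x"
    by blast
  have "a \<otimes> x \<otimes> inv a \<otimes> inv x = inv x \<otimes> (a \<otimes> x \<otimes> inv a)"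
    using x conj_mem_N subgroup.m_inv_closed[OF N_subgroup] by (intro N_commute) auto
  then have "b = inv x \<otimes> (a \<otimes> x \<otimes> inv a) \<otimes> a"
    unfolding b c_eq by simp
  also have "\<dots> = inv x \<otimes> a \<otimes> x"
    using x by (simp add: m_assoc)
  finally show ?thesis
    using x N_closed by blast
qed

end

theorem lemma3p3:
  fixes G (structure) and \<phi> :: "'a set \<Rightarrow> int" and a b :: 'a
  assumes "group G"
    and metabelian: "derived G (derived G (carrier G)) = {\<one>}"
    and iso: "\<phi> \<in> iso (G Mod (derived G (carrier G))) integer_group"
    and "a \<in> carrier G" and "b \<in> carrier G"
    and same: "\<phi> (derived G (carrier G) #> a) = \<phi> (derived G (carrier G) #> b)"
    and gen: "\<phi> (derived G (carrier G) #> a) \<in> {1, -1}"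
  shows "\<exists>g\<in>carrier G. b = inv g \<otimes> a \<otimes> g"
proof -
  interpret group G by fact
  define N where "N = derived G (carrier G)"
  have normal: "N \<lhd> G"
    unfolding N_def by (rule derived_self_is_normal)
  have N_carrier: "N \<subseteq> carrier G"
    unfolding N_def by (rule derived_in_carrier) simp
  interpret abelian_by_cyclic G N a
  proof (intro abelian_by_cyclic.intro abelian_by_cyclic_axioms.intro)
    show "group G" by fact
    show "N \<lhd> G" by (fact normal)
    show "x \<otimes> y = y \<otimes> x" if "x \<in> N" "y \<in> N" for x y
      using commute_if_derived_trivial[OF metabelian[folded N_def] N_carrier that] .
    show "a \<in> carrier G" by fact
    show "\<exists>n\<in>N. \<exists>k::int. g = n \<otimes> a [^] k" if "g \<in> carrier G" for g
      using decompose_if_FactGroup_iso_integer[OF normal iso[folded N_def] \<open>a \<in> carrier G\<close>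
          gen[folded N_def] that] .
  qed
  have "b \<in> N #> a"
    using mem_coset_if_iso_eq[OF normal iso[folded N_def] \<open>a \<in> carrier G\<close> \<open>b \<in> carrier G\<close>
        same[folded N_def]] .
  then show ?thesis
    unfolding N_def by (rule conjugate_if_mem_derived_coset)
qed

end
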